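(* If an analytic function $f(z)=\sum_{n\ge0}f_nz^n$ on $\mathbb{D}$ satisfies $\sup_{n\ge0}|f_n|e^{c\sqrt n}<\infty$ for some $c>0$, then there exists $c'>0$ such that, with $G(t)=\exp(-c'/t)$ and $M_n=\int_{\mathbb{D}}G(1-|z|)|z|^{2n}\,dA(z)$, one has $\sum_{n\ge0}|f_n|^2/M_n<\infty$, i.e. $f\in H_2^*(M)$ for $M=\{M_n\}_{n\ge0}$.
   Context: $\mathbb{D}$ is the unit disk and $dA$ area measure normalized so that $A(\mathbb{D})=1$. $H_2^*(M)$ denotes the space of power series $\sum f_nz^n$ with $\sum_n|f_n|^2/M_n<\infty$. *)

theory Defs
  imports "HOL-Analysis.Analysis"
begin

text \<open>Normalized area measure on the unit disk: dA = (1/pi) dx dy, so A(D) = 1.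
  The weight G(t) = exp(-c'/t) and the moment sequence
  M_n = integral over D of G(1-|z|) |z|^(2n) dA(z).\<close>

definition weightG :: "real \<Rightarrow> real \<Rightarrow> real" where
  "weightG c' t = exp (- c' / t)"

definition momentM :: "real \<Rightarrow> nat \<Rightarrow> real" where
  "momentM c' n = (1 / pi) * integral (ball (0::complex) 1)
      (\<lambda>z. weightG c' (1 - norm z) * norm z ^ (2 * n))"

definition in_H2star :: "(nat \<Rightarrow> real) \<Rightarrow> (nat \<Rightarrow> complex) \<Rightarrow> bool" where
  "in_H2star M fc \<longleftrightarrow> summable (\<lambda>n. (norm (fc n))\<^sup>2 / M n)"

end

theory Submission
  imports Defs "HOL-Real_Asymp.Real_Asymp"
begin

text \<open>The moment \<open>M\<^sub>n\<close> is bounded below by integrating only over a rectangle of area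
  \<open>s\<^sup>2/2\<close> inside the annulus \<open>1 - 2s \<le> |z| \<le> 1 - s\<close>, where
  \<open>G(1 - |z|) \<ge> exp(-c'/s)\<close> and \<open>|z|\<^sup>2\<^sup>n \<ge> (1 - 2s)\<^sup>2\<^sup>n \<ge> exp(-8sn)\<close>.
  With \<open>s = e/\<surd>(n+1)\<close> and \<open>c' = ec/2\<close> for small \<open>e\<close> both factors are at least
  \<open>exp(-c\<surd>(n+1)/2)\<close>, so \<open>M\<^sub>n \<ge> const \<cdot> exp(-c\<surd>n)/(n+1)\<close>. Since
  \<open>|f\<^sub>n|\<^sup>2 \<le> B\<^sup>2 exp(-2c\<surd>n)\<close>, the terms \<open>|f\<^sub>n|\<^sup>2/M\<^sub>n\<close> are
  \<open>O((n+1) exp(-c\<surd>n))\<close>, which is summable. Only the decay of the coefficients is used,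
  not the analyticity of \<open>f\<close>.\<close>

lemma exp_minus_two_mult_le_one_minus:
  fixes x :: real
  assumes "0 \<le> x" "x \<le> 1/2"
  shows "exp (- 2 * x) \<le> 1 - x"
proof -
  have "- 2 * x \<le> - x - 2 * x\<^sup>2"
    using assms by (simp add: power2_eq_square algebra_simps mult_right_le_one_le)
  also have "\<dots> \<le> ln (1 - x)"
    using assms by (intro ln_one_minus_pos_lower_bound)
  finally show ?thesis
    using assms by (simp add: ln_ge_iff)
qed

lemma integral_ball_ge_annulus:
  fixes g :: "complex \<Rightarrow> real" and s k :: real
  assumes g: "g integrable_on ball 0 1"
    and nonneg: "\<And>z. z \<in> ball 0 1 \<Longrightarrow> 0 \<le> g z"
    and bound: "\<And>z. 1 - 2 * s \<le> norm z \<Longrightarrow> norm z \<le> 1 - s \<Longrightarrow> k \<le> g z"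
    and s: "0 < s" "s \<le> 1/4"
  shows "k * s\<^sup>2 / 2 \<le> integral (ball 0 1) g"
proof -
  define R where "R = cbox (Complex (1 - 2 * s) 0) (Complex (1 - 3/2 * s) s)"
  have R_annulus: "1 - 2 * s \<le> norm z \<and> norm z \<le> 1 - s" if "z \<in> R" for z
  proof -
    from that have re: "1 - 2 * s \<le> Re z" "Re z \<le> 1 - 3/2 * s"
      and im: "0 \<le> Im z" "Im z \<le> s"
      by (auto simp: R_def in_cbox_complex_iff)
    have "(norm z)\<^sup>2 = (Re z)\<^sup>2 + (Im z)\<^sup>2"
      by (simp add: cmod_power2)
    also have "\<dots> \<le> (1 - 3/2 * s)\<^sup>2 + s\<^sup>2"
      using re im s by (intro add_mono power_mono) auto
    also have "\<dots> \<le> (1 - s)\<^sup>2"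
      using s by (simp add: power2_eq_square algebra_simps)
    finally have "norm z \<le> 1 - s"
      by (rule power2_le_imp_le) (use s in simp)
    moreover have "1 - 2 * s \<le> norm z"
      using re abs_Re_le_cmod[of z] by linarith
    ultimately show ?thesis by simp
  qed
  then have "R \<subseteq> ball 0 1"
    using s by (fastforce simp: subset_iff)
  have "((\<lambda>z. k) has_integral measure lborel R *\<^sub>R k) R"
    unfolding R_def by (rule has_integral_const)
  then have step_integral:
      "((\<lambda>z. if z \<in> R then k else 0) has_integral measure lborel R *\<^sub>R k) (ball 0 1)"
    by (subst has_integral_restrict[OF \<open>R \<subseteq> ball 0 1\<close>])
  have step_le_g: "(if z \<in> R then k else 0) \<le> g z" if "z \<in> ball 0 1" for z
    using R_annulus[of z] bound[of z] nonneg[OF that] by simp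
  have "measure lborel R *\<^sub>R k \<le> integral (ball 0 1) g"
    by (rule has_integral_le[OF step_integral integrable_integral[OF g] step_le_g])
  moreover have "measure lborel R = s\<^sup>2 / 2"
    using s by (simp add: R_def content_cbox_cases Basis_complex_def power2_eq_square)
  ultimately show ?thesis
    by (simp add: mult.commute)
qed

lemma momentM_integrand_integrable:
  fixes c' :: real
  assumes "0 \<le> c'"
  shows "(\<lambda>z::complex. weightG c' (1 - norm z) * norm z ^ m) integrable_on ball 0 1"
proof (rule measurable_bounded_by_integrable_imp_integrable_real[where g = "\<lambda>_. 1"])
  show "(\<lambda>z::complex. weightG c' (1 - norm z) * norm z ^ m)
          \<in> borel_measurable (lebesgue_on (ball 0 1))"
    unfolding weightG_def
    by (intro continuous_imp_measurable_on_sets_lebesgue continuous_intros) auto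
  show "(\<lambda>z. 1) integrable_on ball (0::complex) 1"
    by (intro integrable_on_const) auto
  show "\<bar>weightG c' (1 - norm z) * norm z ^ m\<bar> \<le> 1" if "z \<in> ball 0 1" for z
  proof -
    have "norm z < 1" using that by simp
    then have "exp (- c' / (1 - norm z)) \<le> 1" "norm z ^ m \<le> 1"
      using assms by (auto intro: power_le_one)
    then show ?thesis by (simp add: weightG_def abs_mult mult_le_one)
  qed
qed auto

lemma momentM_ge:
  fixes c' s :: real
  assumes c': "0 \<le> c'" and s: "0 < s" "s \<le> 1/4"
  shows "exp (- c' / s) * (1 - 2 * s) ^ (2 * n) * s\<^sup>2 / (2 * pi) \<le> momentM c' n"
proof -
  have "exp (- c' / s) * (1 - 2 * s) ^ (2 * n) * s\<^sup>2 / 2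
          \<le> integral (ball 0 1) (\<lambda>z::complex. weightG c' (1 - norm z) * norm z ^ (2 * n))"
  proof (rule integral_ball_ge_annulus[OF momentM_integrand_integrable[OF c'] _ _ s])
    show "0 \<le> weightG c' (1 - norm z) * norm z ^ (2 * n)" for z :: complex
      by (simp add: weightG_def)
    fix z :: complex
    assume z: "1 - 2 * s \<le> norm z" "norm z \<le> 1 - s"
    have "exp (- c' / s) \<le> weightG c' (1 - norm z)"
      unfolding weightG_def using z s c' by (simp add: frac_le)
    moreover have "(1 - 2 * s) ^ (2 * n) \<le> norm z ^ (2 * n)"
      using z s by (intro power_mono) auto
    ultimately show
      "exp (- c' / s) * (1 - 2 * s) ^ (2 * n) \<le> weightG c' (1 - norm z) * norm z ^ (2 * n)"
      using s by (intro mult_mono) (auto simp: weightG_def)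
  qed
  then show ?thesis
    unfolding momentM_def by (simp add: field_simps)
qed

lemma momentM_ge_exp_sqrt:
  fixes c e :: real
  assumes e: "0 < e" "e \<le> 1/4" "16 * e \<le> c"
  shows "e\<^sup>2 / (2 * pi * exp c) * (exp (- c * sqrt n) / (real n + 1)) \<le> momentM (e * c / 2) n"
proof -
  define s where "s = e / sqrt (real n + 1)"
  have sqrt_ge_1: "1 \<le> sqrt (real n + 1)"
    by simp
  then have "s \<le> e"
    using e by (simp add: s_def divide_le_eq mult_le_cancel_left1)
  moreover have "0 < s"
    using e by (simp add: s_def)
  ultimately have s: "0 < s" "s \<le> 1/4"
    using e by linarith+
  have "exp (- 8 * s * n) = exp (- 2 * (2 * s)) ^ (2 * n)"
    by (simp flip: exp_of_nat_mult)
  also have "\<dots> \<le> (1 - 2 * s) ^ (2 * n)"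
    using s exp_minus_two_mult_le_one_minus[of "2 * s"] by (intro power_mono) auto
  finally have power_ge: "exp (- 8 * s * n) \<le> (1 - 2 * s) ^ (2 * n)" .
  have "n / sqrt (real n + 1) \<le> sqrt (real n + 1)"
    using sqrt_ge_1 by (simp add: divide_le_eq)
  then have "8 * e * (n / sqrt (real n + 1)) \<le> c / 2 * sqrt (real n + 1)"
    using e by (intro mult_mono) auto
  then have "8 * s * n \<le> c / 2 * sqrt (real n + 1)"
    by (simp add: s_def)
  moreover have "- (e * c / 2) / s = - (c / 2 * sqrt (real n + 1))"
    using e by (simp add: s_def)
  moreover have "c * sqrt (real n + 1) \<le> c * sqrt n + c"
  proof -
    have "0 \<le> c"
      using e by linarith
    then show ?thesis
      using mult_left_mono[OF sqrt_add_le_add_sqrt[of n 1]] by (simp add: distrib_left)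
  qed
  ultimately have "- c * sqrt n - c \<le> - (e * c / 2) / s - 8 * s * n"
    by linarith
  then have "exp (- c * sqrt n) / exp c \<le> exp (- (e * c / 2) / s) * exp (- 8 * s * n)"
    by (simp flip: exp_diff exp_add)
  also have "\<dots> \<le> exp (- (e * c / 2) / s) * (1 - 2 * s) ^ (2 * n)"
    using power_ge by simp
  finally have weight_ge:
    "exp (- c * sqrt n) / exp c \<le> exp (- (e * c / 2) / s) * (1 - 2 * s) ^ (2 * n)" .
  have "e\<^sup>2 / (2 * pi * exp c) * (exp (- c * sqrt n) / (real n + 1))
          = exp (- c * sqrt n) / exp c * s\<^sup>2 / (2 * pi)"
    by (simp add: s_def power_divide mult_ac)
  also have "\<dots> \<le> exp (- (e * c / 2) / s) * (1 - 2 * s) ^ (2 * n) * s\<^sup>2 / (2 * pi)"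
    using weight_ge by (intro divide_right_mono mult_right_mono) auto
  also have "\<dots> \<le> momentM (e * c / 2) n"
    using e s by (intro momentM_ge) auto
  finally show ?thesis .
qed

lemma summable_mult_exp_minus_sqrt:
  fixes c :: real
  assumes "0 < c"
  shows "summable (\<lambda>n::nat. (real n + 1) * exp (- c * sqrt n))"
proof (rule summable_comparison_test_bigo)
  show "summable (\<lambda>n::nat. norm (real n powr -2))"
    using summable_real_powr_iff[of "-2"] by simp
  show "(\<lambda>n::nat. (real n + 1) * exp (- c * sqrt n)) \<in> O(\<lambda>n. real n powr -2)"
    using assms by real_asymp
qed

lemma summable_norm_sq_divide:
  fixes a :: "nat \<Rightarrow> complex" and M :: "nat \<Rightarrow> real" and A B c :: real
  assumes c: "0 < c" and A: "0 < A"
    and a: "\<And>n. norm (a n) \<le> B * exp (- c * sqrt n)"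
    and M: "\<And>n. A * (exp (- c * sqrt n) / (real n + 1)) \<le> M n"
  shows "summable (\<lambda>n. (norm (a n))\<^sup>2 / M n)"
proof (rule summable_comparison_test)
  show "summable (\<lambda>n. B\<^sup>2 / A * ((real n + 1) * exp (- c * sqrt n)))"
    using c by (intro summable_mult summable_mult_exp_minus_sqrt)
  show "\<exists>N. \<forall>n\<ge>N. norm ((norm (a n))\<^sup>2 / M n) \<le> B\<^sup>2 / A * ((real n + 1) * exp (- c * sqrt n))"
  proof (intro exI allI impI)
    fix n :: nat
    have "0 < A * (exp (- c * sqrt n) / (real n + 1))"
      using A by simp
    then have M_pos: "0 < M n"
      using M[of n] by linarith
    have "(norm (a n))\<^sup>2 \<le> (B * exp (- c * sqrt n))\<^sup>2"
      using a[of n] by (intro power_mono) auto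
    also have "\<dots> = B\<^sup>2 / A * ((real n + 1) * exp (- c * sqrt n))
                      * (A * (exp (- c * sqrt n) / (real n + 1)))"
      using A by (simp add: power2_eq_square)
    also have "\<dots> \<le> B\<^sup>2 / A * ((real n + 1) * exp (- c * sqrt n)) * M n"
      using M[of n] A by (intro mult_left_mono) auto
    finally show "norm ((norm (a n))\<^sup>2 / M n) \<le> B\<^sup>2 / A * ((real n + 1) * exp (- c * sqrt n))"
      using M_pos by (simp add: divide_le_eq)
  qed
qed

theorem mainTheorem14:
  fixes f :: "complex \<Rightarrow> complex" and fc :: "nat \<Rightarrow> complex" and c :: real
  assumes "f holomorphic_on ball 0 1"
    and "\<And>z. z \<in> ball 0 1 \<Longrightarrow> (\<lambda>n. fc n * z ^ n) sums f z"
    and "c > 0"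
    and "bdd_above (range (\<lambda>n. norm (fc n) * exp (c * sqrt (real n))))"
  shows "\<exists>c' > 0. in_H2star (momentM c') fc"
proof -
  obtain B where B: "\<And>n. norm (fc n) * exp (c * sqrt n) \<le> B"
    using assms(4) by (auto simp: bdd_above_def)
  have decay: "norm (fc n) \<le> B * exp (- c * sqrt n)" for n
    using B[of n] by (simp add: exp_minus pos_le_divide_eq flip: divide_inverse)
  define e where "e = min (c / 16) (1 / 4)"
  have e: "0 < e" "e \<le> 1/4" "16 * e \<le> c"
    using \<open>c > 0\<close> by (auto simp: e_def)
  have "summable (\<lambda>n. (norm (fc n))\<^sup>2 / momentM (e * c / 2) n)"
    using summable_norm_sq_divide[OF \<open>c > 0\<close> _ decay momentM_ge_exp_sqrt[OF e]] e by simp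
  moreover have "e * c / 2 > 0"
    using \<open>c > 0\<close> e by simp
  ultimately show ?thesis
    unfolding in_H2star_def by blast
qed

end
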